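(* Let $(D,\Gamma)$ be a consistent action theory, $n\ge0$, and let $s_0a_0s_1\dots a_{n-1}s_n$ be a trajectory in $D$ with $s_0=s_0^\Gamma$. Then the program $\pi$ has an answer set $X$ such that $s_t(X)=s_t$ for every $t\in\{0,\dots,n\}$ and $occ(a_t,t)\in X$ for every $t\in\{0,\dots,n-1\}$.
   Context: Action language $\mathcal{B}$: fix finite sets $\mathbf{F}$ of fluents and $\mathbf{A}$ of actions. A fluent literal is $f$ or $\neg f$ ($f\in\mathbf{F}$); the complement $\bar l$ of $f$ is $\neg f$ and of $\neg f$ is $f$. A set of fluent literals is consistent if it contains no pair $f,\neg f$; an interpretation is a maximal consistent set. For a set $u$ of literals, $u\models p_1\wedge\dots\wedge p_k$ means $\{p_1,\dots,p_k\}\subseteq u$. A domain description $D$ is a finite set of static causal laws $\mathbf{caused}(\{p_1,\dots,p_k\},f)$ (their set is $D_C$), dynamic causal laws $\mathbf{causes}(a,f,\{p_1,\dots,p_k\})$ and executability conditions $\mathbf{executable}(a,\{p_1,\dots,p_k\})$, with $a\in\mathbf{A}$ and $f,p_i$ fluent literals; $\Gamma$ is a set of propositions $\mathbf{initially}(f)$. A consistent set $u$ is closed under $D_C$ if for every $\mathbf{caused}(P,f)\in D_C$ with $P\subseteq u$, $f\in u$; $Cl_{D_C}(u)$ is the least consistent superset of $u$ closed under $D_C$ (undefined if none). A state is an interpretation closed under $D_C$. Action $a$ is executable in state $s$ if some $\mathbf{executable}(a,P)\in D$ has $P\subseteq s$. $E(a,s)=\{f\mid \mathbf{causes}(a,f,P)\in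 D,\ P\subseteq s\}$. $\Phi(a,s)=\{s'\mid s'\text{ a state},\ s'=Cl_{D_C}(E(a,s)\cup(s\cap s'))\}$ if $a$ is executable in $s$, and $\Phi(a,s)=\emptyset$ otherwise. A trajectory is a sequence $s_0a_0s_1\dots a_{m-1}s_m$ of states $s_i$ and actions $a_i$ with $s_{i+1}\in\Phi(a_i,s_i)$. $D$ is consistent if $\Phi(a,s)\ne\emptyset$ whenever $a$ is executable in state $s$; $(D,\Gamma)$ is consistent if $D$ is consistent and $s_0^\Gamma:=\{f\mid\mathbf{initially}(f)\in\Gamma\}$ is a state of $D$. Answer sets: a ground normal program consists of rules $h\leftarrow b_1,\dots,b_m,\mathit{not}\,c_1,\dots,\mathit{not}\,c_r$ and constraints $\bot\leftarrow b_1,\dots,b_m,\mathit{not}\,c_1,\dots,\mathit{not}\,c_r$. For a set $S$ of atoms, the reduct $\Pi^S$ deletes every rule/constraint containing $\mathit{not}\,c$ with $c\in S$ and deletes all $\mathit{not}$-literals from the rest; $S$ is an answer set of $\Pi$ if $S$ is the least set of atoms closed under the non-constraint rules of $\Pi^S$ and no constraint of $\Pi^S$ has its whole body contained in $S$. The program $\pi$ (ground; $t$ ranges over $\{0,\dots,n\}$ unless stated): (1) $holds(l,0)\leftarrow$ for each $\mathbf{initially}(l)\in\Gamma$; (2) $possible(a,t)\leftarrow holds(p_1,t),\dots,holds(p_k,t)$ for each $\mathbf{executable}(a,\{p_1,\dots,p_k\})\in D$; (3) for $t\in\{0,\dots,n-1\}$, $holds(f,t+1)\leftarrow occ(a,t),possible(a,t),holds(p_1,t),\dots,holds(p_k,t)$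 for each $\mathbf{causes}(a,f,\{p_1,\dots,p_k\})\in D$; (4) $holds(f,t)\leftarrow holds(p_1,t),\dots,holds(p_k,t)$ for each $\mathbf{caused}(\{p_1,\dots,p_k\},f)\in D$; (5) $occ(a,t)\leftarrow possible(a,t),\mathit{not}\,nocc(a,t)$ for each action $a$; (6) $nocc(a,t)\leftarrow occ(b,t)$ for each pair of distinct actions $a\ne b$; (7) for $t\in\{0,\dots,n-1\}$, $holds(l,t+1)\leftarrow holds(l,t),\mathit{not}\,holds(\bar l,t+1)$ for each fluent literal $l$; (8) $\bot\leftarrow holds(f,t),holds(\neg f,t)$ for each fluent $f$. For a set $M$ of atoms, $s_i(M)=\{l\mid l\text{ a fluent literal},\ holds(l,i)\in M\}$. *)

theory Defs
  imports Main
begin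

datatype 'f lit = Pos 'f | Neg 'f

fun compl :: "'f lit \<Rightarrow> 'f lit" where
  "compl (Pos f) = Neg f"
| "compl (Neg f) = Pos f"

datatype ('f, 'a) law =
    Caused "'f lit set" "'f lit"
  | Causes 'a "'f lit" "'f lit set"
  | Executable 'a "'f lit set"

definition consistent_lits :: "'f lit set \<Rightarrow> bool" where
  "consistent_lits u \<longleftrightarrow> (\<forall>f. \<not> (Pos f \<in> u \<and> Neg f \<in> u))"

definition is_interpretation :: "'f lit set \<Rightarrow> bool" where
  "is_interpretation u \<longleftrightarrow> consistent_lits u \<and>
     (\<forall>v. consistent_lits v \<and> u \<subseteq> v \<longrightarrow> v = u)"

definition closed_DC :: "('f, 'a) law set \<Rightarrow> 'f lit set \<Rightarrow> bool" where
  "closed_DC D u \<longleftrightarrow> consistent_lits u \<and>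
     (\<forall>P f. Caused P f \<in> D \<and> P \<subseteq> u \<longrightarrow> f \<in> u)"

definition is_least_closed :: "('f, 'a) law set \<Rightarrow> 'f lit set \<Rightarrow> 'f lit set \<Rightarrow> bool" where
  "is_least_closed D u v \<longleftrightarrow> u \<subseteq> v \<and> closed_DC D v \<and>
     (\<forall>w. u \<subseteq> w \<and> closed_DC D w \<longrightarrow> v \<subseteq> w)"

definition Cl :: "('f, 'a) law set \<Rightarrow> 'f lit set \<Rightarrow> 'f lit set option" where
  "Cl D u = (if \<exists>v. is_least_closed D u v then Some (THE v. is_least_closed D u v) else None)"

definition state :: "('f, 'a) law set \<Rightarrow> 'f lit set \<Rightarrow> bool" where
  "state D s \<longleftrightarrow> is_interpretation s \<and> closed_DC D s"

definition executable_in :: "('f, 'a) law set \<Rightarrow> 'a \<Rightarrow> 'f lit set \<Rightarrow> bool" where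
  "executable_in D a s \<longleftrightarrow> (\<exists>P. Executable a P \<in> D \<and> P \<subseteq> s)"

definition Eff :: "('f, 'a) law set \<Rightarrow> 'a \<Rightarrow> 'f lit set \<Rightarrow> 'f lit set" where
  "Eff D a s = {f. \<exists>P. Causes a f P \<in> D \<and> P \<subseteq> s}"

definition Phi :: "('f, 'a) law set \<Rightarrow> 'a \<Rightarrow> 'f lit set \<Rightarrow> 'f lit set set" where
  "Phi D a s = (if executable_in D a s
     then {s'. state D s' \<and> Cl D (Eff D a s \<union> (s \<inter> s')) = Some s'}
     else {})"

text \<open>Trajectory s_0 a_0 s_1 ... a_{n-1} s_n, given by s :: nat => states and a :: nat => actions.\<close>
definition trajectory :: "('f, 'a) law set \<Rightarrow> nat \<Rightarrow> (nat \<Rightarrow> 'f lit set) \<Rightarrow> (nat \<Rightarrow> 'a) \<Rightarrow> bool" where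
  "trajectory D n s a \<longleftrightarrow> (\<forall>i\<le>n. state D (s i)) \<and> (\<forall>i<n. s (Suc i) \<in> Phi D (a i) (s i))"

definition consistent_D :: "('f, 'a) law set \<Rightarrow> bool" where
  "consistent_D D \<longleftrightarrow> (\<forall>a s. state D s \<and> executable_in D a s \<longrightarrow> Phi D a s \<noteq> {})"

text \<open>Gamma is represented by the set of literals l with initially(l) in Gamma, i.e. s_0^Gamma.\<close>
definition consistent_theory :: "('f, 'a) law set \<Rightarrow> 'f lit set \<Rightarrow> bool" where
  "consistent_theory D Gamma \<longleftrightarrow> consistent_D D \<and> state D Gamma"

datatype ('f, 'a) atom = Holds "'f lit" nat | Possible 'a nat | Occ 'a nat | Nocc 'a nat

text \<open>Rule head body_pos body_neg; head None = constraint (bottom).\<close>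
datatype 'x rule = Rule "'x option" "'x set" "'x set"

definition reduct :: "'x rule set \<Rightarrow> 'x set \<Rightarrow> ('x option \<times> 'x set) set" where
  "reduct P S = {(h, B) | h B C. Rule h B C \<in> P \<and> C \<inter> S = {}}"

definition closed_rules :: "('x option \<times> 'x set) set \<Rightarrow> 'x set \<Rightarrow> bool" where
  "closed_rules R M \<longleftrightarrow> (\<forall>h B. (Some h, B) \<in> R \<and> B \<subseteq> M \<longrightarrow> h \<in> M)"

definition answer_set :: "'x rule set \<Rightarrow> 'x set \<Rightarrow> bool" where
  "answer_set P S \<longleftrightarrow>
     (closed_rules (reduct P S) S \<and> (\<forall>M. closed_rules (reduct P S) M \<longrightarrow> S \<subseteq> M)) \<and>
     (\<forall>B. (None, B) \<in> reduct P S \<longrightarrow> \<not> B \<subseteq> S)"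

definition program :: "('f, 'a) law set \<Rightarrow> 'f lit set \<Rightarrow> nat \<Rightarrow> ('f, 'a) atom rule set" where
  "program D Gamma n =
     {Rule (Some (Holds l 0)) {} {} | l. l \<in> Gamma}
   \<union> {Rule (Some (Possible a t)) ((\<lambda>p. Holds p t) ` P) {} | a P t. Executable a P \<in> D \<and> t \<le> n}
   \<union> {Rule (Some (Holds f (Suc t))) ({Occ a t, Possible a t} \<union> (\<lambda>p. Holds p t) ` P) {}
        | a f P t. Causes a f P \<in> D \<and> t < n}
   \<union> {Rule (Some (Holds f t)) ((\<lambda>p. Holds p t) ` P) {} | f P t. Caused P f \<in> D \<and> t \<le> n}
   \<union> {Rule (Some (Occ a t)) {Possible a t} {Nocc a t} | a t. t \<le> n}
   \<union> {Rule (Some (Nocc a t)) {Occ b t} {} | a b t. a \<noteq> b \<and> t \<le> n}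
   \<union> {Rule (Some (Holds l (Suc t))) {Holds l t} {Holds (compl l) (Suc t)} | l t. t < n}
   \<union> {Rule None {Holds (Pos f) t, Holds (Neg f) t} {} | f t. t \<le> n}"

definition s_at :: "('f, 'a) atom set \<Rightarrow> nat \<Rightarrow> 'f lit set" where
  "s_at M i = {l. Holds l i \<in> M}"

end

theory Submission
  imports Defs
begin

text \<open>
  X is read off the trajectory: holds-atoms from the states s_t, possible-atoms for the actions
  executable in s_t, occ for the action a_t and nocc for every other action. Rule (5) also fires
  at time n, so a_n is taken to be an arbitrary action executable in s_n.

  X is closed under its reduct because the states are closed interpretations and s_{t+1}
  contains E(a_t, s_t) and s_t \<inter> s_{t+1}. For minimality, let M be closed under the reduct
  and show s_t \<subseteq> s_t(M) by induction on t: the part of s_{t+1} derived in M contains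
  E(a_t, s_t) by the dynamic laws and s_t \<inter> s_{t+1} by inertia (whose negative body is
  evaluated against X, not M), and it is closed under the static laws; as s_{t+1} is the least
  such closed set, it is contained in s_{t+1}(M).
\<close>

lemma interpretation_compl_notin_iff:
  assumes "is_interpretation s"
  shows "compl l \<notin> s \<longleftrightarrow> l \<in> s"
proof
  assume "compl l \<notin> s"
  then have "consistent_lits (insert l s)"
    using assms unfolding is_interpretation_def consistent_lits_def by (cases l) auto
  then have "insert l s = s"
    using assms unfolding is_interpretation_def by blast
  then show "l \<in> s" by blast
next
  assume "l \<in> s"
  then show "compl l \<notin> s"
    using assms unfolding is_interpretation_def consistent_lits_def by (cases l) auto
qed

lemma Cl_SomeD:
  assumes "Cl D u = Some v"
  shows "is_least_closed D u v"
proof -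
  have ex: "\<exists>v. is_least_closed D u v"
    using assms unfolding Cl_def by (auto split: if_splits)
  have unique: "x = y" if "is_least_closed D u x" "is_least_closed D u y" for x y
    using that unfolding is_least_closed_def by blast
  have "v = (THE v. is_least_closed D u v)"
    using assms ex unfolding Cl_def by auto
  then show ?thesis
    using ex unique by (metis theI)
qed

lemma closed_DC_CausedD: "closed_DC D u \<Longrightarrow> Caused P f \<in> D \<Longrightarrow> P \<subseteq> u \<Longrightarrow> f \<in> u"
  unfolding closed_DC_def by blast

lemma is_least_closed_subset: "is_least_closed D u v \<Longrightarrow> u \<subseteq> v"
  unfolding is_least_closed_def by simp

lemma is_least_closed_induct:
  assumes least: "is_least_closed D u v"
    and base: "u \<subseteq> w"
    and step: "\<And>P f. Caused P f \<in> D \<Longrightarrow> P \<subseteq> v \<inter> w \<Longrightarrow> f \<in> w"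
  shows "v \<subseteq> w"
proof -
  have v_closed: "closed_DC D v"
    using least unfolding is_least_closed_def by blast
  then have "consistent_lits (v \<inter> w)"
    unfolding closed_DC_def consistent_lits_def by blast
  moreover have "f \<in> v \<inter> w" if "Caused P f \<in> D" "P \<subseteq> v \<inter> w" for P f
    using that closed_DC_CausedD[OF v_closed] step by blast
  ultimately have "closed_DC D (v \<inter> w)"
    unfolding closed_DC_def by blast
  moreover have "u \<subseteq> v \<inter> w"
    using is_least_closed_subset[OF least] base by blast
  ultimately show ?thesis
    using least unfolding is_least_closed_def by (metis le_inf_iff)
qed

lemma Phi_memD:
  assumes "s' \<in> Phi D a s"
  shows "executable_in D a s" and "is_least_closed D (Eff D a s \<union> (s \<inter> s')) s'"
  using assms Cl_SomeD unfolding Phi_def by (auto split: if_splits)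

lemma trajectory_extend_final_action:
  assumes "trajectory D n s a"
  obtains b where "trajectory D n s b" "\<forall>t<n. b t = a t"
    "\<And>c. executable_in D c (s n) \<Longrightarrow> executable_in D (b n) (s n)"
proof
  let ?b = "a(n := SOME c. executable_in D c (s n))"
  show "trajectory D n s ?b"
    using assms unfolding trajectory_def by simp
  show "\<forall>t<n. ?b t = a t" by simp
  show "executable_in D (?b n) (s n)" if "executable_in D c (s n)" for c
    using that by (simp add: someI [of "\<lambda>c. executable_in D c (s n)"])
qed

lemma closed_reductD:
  assumes "closed_rules (reduct P S) M" "Rule (Some h) B C \<in> P" "C \<inter> S = {}" "B \<subseteq> M"
  shows "h \<in> M"
  using assms unfolding closed_rules_def reduct_def by blast

lemma program_rule_cases:
  assumes "Rule h B C \<in> program D Gamma n"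
  obtains (initial) l where "h = Some (Holds l 0)" "B = {}" "C = {}" "l \<in> Gamma"
  | (executable) c P t where "h = Some (Possible c t)" "B = (\<lambda>p. Holds p t) ` P" "C = {}"
      "Executable c P \<in> D" "t \<le> n"
  | (dynamic) c f P t where "h = Some (Holds f (Suc t))"
      "B = {Occ c t, Possible c t} \<union> (\<lambda>p. Holds p t) ` P" "C = {}" "Causes c f P \<in> D" "t < n"
  | (static) f P t where "h = Some (Holds f t)" "B = (\<lambda>p. Holds p t) ` P" "C = {}"
      "Caused P f \<in> D" "t \<le> n"
  | (occurs) c t where "h = Some (Occ c t)" "B = {Possible c t}" "C = {Nocc c t}" "t \<le> n"
  | (not_occurs) c c' t where "h = Some (Nocc c t)" "B = {Occ c' t}" "C = {}" "c \<noteq> c'" "t \<le> n"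
  | (inertia) l t where "h = Some (Holds l (Suc t))" "B = {Holds l t}"
      "C = {Holds (compl l) (Suc t)}" "t < n"
  | (constraint) f t where "h = None" "B = {Holds (Pos f) t, Holds (Neg f) t}" "C = {}" "t \<le> n"
  using assms unfolding program_def by (elim UnE CollectE exE conjE; simp)

lemma program_memI:
  "l \<in> Gamma \<Longrightarrow> Rule (Some (Holds l 0)) {} {} \<in> program D Gamma n"
  "Executable c P \<in> D \<Longrightarrow> t \<le> n \<Longrightarrow>
     Rule (Some (Possible c t)) ((\<lambda>p. Holds p t) ` P) {} \<in> program D Gamma n"
  "Causes c f P \<in> D \<Longrightarrow> t < n \<Longrightarrow>
     Rule (Some (Holds f (Suc t))) ({Occ c t, Possible c t} \<union> (\<lambda>p. Holds p t) ` P) {}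
       \<in> program D Gamma n"
  "Caused P f \<in> D \<Longrightarrow> t \<le> n \<Longrightarrow>
     Rule (Some (Holds f t)) ((\<lambda>p. Holds p t) ` P) {} \<in> program D Gamma n"
  "t \<le> n \<Longrightarrow> Rule (Some (Occ c t)) {Possible c t} {Nocc c t} \<in> program D Gamma n"
  "c \<noteq> c' \<Longrightarrow> t \<le> n \<Longrightarrow> Rule (Some (Nocc c t)) {Occ c' t} {} \<in> program D Gamma n"
  "t < n \<Longrightarrow>
     Rule (Some (Holds l (Suc t))) {Holds l t} {Holds (compl l) (Suc t)} \<in> program D Gamma n"
  unfolding program_def by (intro UnI1 UnI2; auto)+

locale trajectory_with_choice =
  fixes D :: "('f, 'a) law set" and Gamma :: "'f lit set" and n :: nat
    and s :: "nat \<Rightarrow> 'f lit set" and b :: "nat \<Rightarrow> 'a"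
  assumes trajectory: "trajectory D n s b"
    and initial_state: "s 0 = Gamma"
    and final_choice: "executable_in D c (s n) \<Longrightarrow> executable_in D (b n) (s n)"
begin

lemma state: "t \<le> n \<Longrightarrow> state D (s t)"
  using trajectory unfolding trajectory_def by blast

lemma step_in_Phi: "t < n \<Longrightarrow> s (Suc t) \<in> Phi D (b t) (s t)"
  using trajectory unfolding trajectory_def by blast

lemma executable_step: "t < n \<Longrightarrow> executable_in D (b t) (s t)"
  using Phi_memD(1)[OF step_in_Phi] .

lemma least_closed_step:
  "t < n \<Longrightarrow> is_least_closed D (Eff D (b t) (s t) \<union> (s t \<inter> s (Suc t))) (s (Suc t))"
  using Phi_memD(2)[OF step_in_Phi] .

lemma executable_choice: "t \<le> n \<Longrightarrow> executable_in D c (s t) \<Longrightarrow> executable_in D (b t) (s t)"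
  using executable_step final_choice by (cases "t < n") auto

definition answer :: "('f, 'a) atom set" where
  "answer = {x. case x of
      Holds l t \<Rightarrow> t \<le> n \<and> l \<in> s t
    | Possible c t \<Rightarrow> t \<le> n \<and> executable_in D c (s t)
    | Occ c t \<Rightarrow> t \<le> n \<and> executable_in D c (s t) \<and> c = b t
    | Nocc c t \<Rightarrow> t \<le> n \<and> executable_in D (b t) (s t) \<and> c \<noteq> b t}"

lemma mem_answer [simp]:
  "Holds l t \<in> answer \<longleftrightarrow> t \<le> n \<and> l \<in> s t"
  "Possible c t \<in> answer \<longleftrightarrow> t \<le> n \<and> executable_in D c (s t)"
  "Occ c t \<in> answer \<longleftrightarrow> t \<le> n \<and> executable_in D c (s t) \<and> c = b t"
  "Nocc c t \<in> answer \<longleftrightarrow> t \<le> n \<and> executable_in D (b t) (s t) \<and> c \<noteq> b t"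
  unfolding answer_def by simp_all

lemma s_at_answer: "t \<le> n \<Longrightarrow> s_at answer t = s t"
  unfolding s_at_def by simp

lemma answer_closed: "closed_rules (reduct (program D Gamma n) answer) answer"
  unfolding closed_rules_def reduct_def
proof clarify
  fix h B C
  assume rule: "Rule (Some h) B C \<in> program D Gamma n"
    and neg: "C \<inter> answer = {}" and body: "B \<subseteq> answer"
  from rule show "h \<in> answer"
  proof (cases rule: program_rule_cases)
    case (initial l)
    then show ?thesis using initial_state by simp
  next
    case (executable c P t)
    with body have "P \<subseteq> s t" by auto
    with executable have "executable_in D c (s t)"
      unfolding executable_in_def by blast
    with executable show ?thesis by simp
  next
    case (dynamic c f P t)
    from body dynamic(2) have "Occ c t \<in> answer" "(\<lambda>p. Holds p t) ` P \<subseteq> answer"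
      by blast+
    then have "c = b t" "P \<subseteq> s t" by auto
    with dynamic(4) have "f \<in> Eff D (b t) (s t)"
      unfolding Eff_def by blast
    with is_least_closed_subset[OF least_closed_step[OF \<open>t < n\<close>]] have "f \<in> s (Suc t)"
      by blast
    with dynamic(1,5) show ?thesis by simp
  next
    case (static f P t)
    with body have "P \<subseteq> s t" by auto
    moreover have "closed_DC D (s t)"
      using state[OF \<open>t \<le> n\<close>] unfolding state_def by blast
    ultimately have "f \<in> s t"
      using closed_DC_CausedD \<open>Caused P f \<in> D\<close> by blast
    with static show ?thesis by simp
  next
    case (occurs c t)
    with body have "t \<le> n" "executable_in D c (s t)" by auto
    then have "executable_in D (b t) (s t)" by (rule executable_choice)
    with occurs neg have "c = b t" by auto
    with occurs \<open>executable_in D c (s t)\<close> show ?thesis by simp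
  next
    case (not_occurs c c' t)
    with body show ?thesis by auto
  next
    case (inertia l t)
    with neg have "compl l \<notin> s (Suc t)" by auto
    moreover have "is_interpretation (s (Suc t))"
      using state[of "Suc t"] \<open>t < n\<close> unfolding state_def by simp
    ultimately have "l \<in> s (Suc t)"
      using interpretation_compl_notin_iff by blast
    with inertia show ?thesis by simp
  qed simp
qed

lemma answer_constraints:
  assumes "(None, B) \<in> reduct (program D Gamma n) answer"
  shows "\<not> B \<subseteq> answer"
proof -
  from assms obtain C where "Rule None B C \<in> program D Gamma n"
    unfolding reduct_def by blast
  then obtain f t where "B = {Holds (Pos f) t, Holds (Neg f) t}"
    by (cases rule: program_rule_cases) auto
  with state show ?thesis
    unfolding state_def closed_DC_def consistent_lits_def by auto
qed

context
  fixes M assumes closed: "closed_rules (reduct (program D Gamma n) answer) M"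
begin

lemma possible_in_closed:
  assumes "t \<le> n" "s t \<subseteq> s_at M t" "executable_in D c (s t)"
  shows "Possible c t \<in> M"
proof -
  obtain P where "Executable c P \<in> D" "P \<subseteq> s t"
    using assms(3) unfolding executable_in_def by blast
  with assms show ?thesis
    by (intro closed_reductD[OF closed program_memI(2)]) (auto simp: s_at_def)
qed

lemma occ_in_closed:
  assumes "t \<le> n" "s t \<subseteq> s_at M t" "executable_in D (b t) (s t)"
  shows "Occ (b t) t \<in> M"
  using assms possible_in_closed[OF assms]
  by (intro closed_reductD[OF closed program_memI(5)]) auto

lemma state_subset_closed: "t \<le> n \<Longrightarrow> s t \<subseteq> s_at M t"
proof (induction t)
  case 0
  show ?case
    using closed_reductD[OF closed program_memI(1)] initial_state unfolding s_at_def by auto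
next
  case (Suc t)
  then have t: "t < n" and IH: "s t \<subseteq> s_at M t" by simp_all
  have occ: "Occ (b t) t \<in> M"
    using occ_in_closed[OF less_imp_le[OF t] IH executable_step[OF t]] .
  have possible: "Possible (b t) t \<in> M"
    using possible_in_closed[OF less_imp_le[OF t] IH executable_step[OF t]] .
  show ?case
  proof (rule is_least_closed_induct[OF least_closed_step[OF t]], intro subsetI)
    fix l assume l: "l \<in> Eff D (b t) (s t) \<union> (s t \<inter> s (Suc t))"
    show "l \<in> s_at M (Suc t)"
    proof (cases "l \<in> Eff D (b t) (s t)")
      case True
      then obtain P where "Causes (b t) l P \<in> D" "P \<subseteq> s t"
        unfolding Eff_def by blast
      with IH t occ possible show ?thesis
        unfolding s_at_def by (intro CollectI closed_reductD[OF closed program_memI(3)]) auto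
    next
      case False
      with l have "l \<in> s t" "compl l \<notin> s (Suc t)"
        using interpretation_compl_notin_iff state[OF Suc.prems] unfolding state_def by auto
      with IH t show ?thesis
        unfolding s_at_def by (intro CollectI closed_reductD[OF closed program_memI(7)]) auto
    qed
  next
    fix P f assume "Caused P f \<in> D" "P \<subseteq> s (Suc t) \<inter> s_at M (Suc t)"
    with Suc.prems show "f \<in> s_at M (Suc t)"
      unfolding s_at_def by (intro CollectI closed_reductD[OF closed program_memI(4)]) auto
  qed
qed

lemma answer_subset_closed: "answer \<subseteq> M"
proof
  fix x assume x: "x \<in> answer"
  then show "x \<in> M"
  proof (cases x)
    case (Holds l t)
    with x state_subset_closed[of t] show ?thesis unfolding s_at_def by auto
  next
    case (Possible c t)
    with x have "t \<le> n" "executable_in D c (s t)" by simp_all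
    with Possible show ?thesis
      using possible_in_closed state_subset_closed by blast
  next
    case (Occ c t)
    with x have "t \<le> n" "executable_in D (b t) (s t)" "c = b t" by auto
    with Occ show ?thesis
      using occ_in_closed state_subset_closed by blast
  next
    case (Nocc c t)
    with x have "t \<le> n" "executable_in D (b t) (s t)" "c \<noteq> b t" by simp_all
    then have "Occ (b t) t \<in> M"
      using occ_in_closed state_subset_closed by blast
    with \<open>t \<le> n\<close> \<open>c \<noteq> b t\<close> have "Nocc c t \<in> M"
      by (intro closed_reductD[OF closed program_memI(6)]) auto
    with Nocc show ?thesis by simp
  qed
qed

end

theorem answer_set_answer: "answer_set (program D Gamma n) answer"
  unfolding answer_set_def
  using answer_closed answer_subset_closed answer_constraints by (intro conjI allI impI)

end

theorem mainTheorem6: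
  fixes D :: "('f::finite, 'a::finite) law set"
    and Gamma :: "'f lit set"
    and n :: nat
    and s :: "nat \<Rightarrow> 'f lit set"
    and a :: "nat \<Rightarrow> 'a"
  assumes "finite D"
    and "consistent_theory D Gamma"
    and "trajectory D n s a"
    and "s 0 = Gamma"
  shows "\<exists>X. answer_set (program D Gamma n) X \<and>
             (\<forall>t\<le>n. s_at X t = s t) \<and>
             (\<forall>t<n. Occ (a t) t \<in> X)"
proof -
  obtain b where traj: "trajectory D n s b" and agree: "\<forall>t<n. b t = a t"
    and final: "\<And>c. executable_in D c (s n) \<Longrightarrow> executable_in D (b n) (s n)"
    using trajectory_extend_final_action[OF assms(3)] by blast
  interpret trajectory_with_choice D Gamma n s b
    using traj assms(4) final by unfold_locales
  have "\<forall>t<n. Occ (a t) t \<in> answer"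
    using agree executable_step by simp
  then show ?thesis
    using answer_set_answer s_at_answer by blast
qed

end
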